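(* Fix $p\le 5$ and a relative order $R$ of length $p$. Let $n_1,\dots,n_h$ and $n'_1,\dots,n'_h$ be nonnegative integers with $n'_a\le n_a$ for all $a$, $\sum_a(n_a-n'_a)\le 5$, and $n'=\sum_a n'_a\ge p$ (the $n'_a$ may be $0$); let $n=\sum_a n_a$. Let $P_1$ be the probability that $(\pi(1),\dots,\pi(p))$ has relative order $R$ when $\pi$ is a uniformly distributed permutation of $\{1^{n_1},\dots,h^{n_h}\}$, and $P_2$ the same probability when $\pi$ is a uniformly distributed permutation of $\{1^{n'_1},\dots,h^{n'_h}\}$. Then $|P_1-P_2|\le C/n$ for an absolute constant $C$ (independent of $h$, $n$, the $n_a$, the $n'_a$, and $R$).
   Context: A permutation of the multiset $\{1^{m_1},\dots,h^{m_h}\}$ is a sequence $(\pi(1),\dots,\pi(m))$, $m=\sum m_a$, in which each $a$ occurs exactly $m_a$ times; uniformly distributed means all such sequences are equally likely. The relative order of a sequence $s_1,\dots,s_p$ is the ordered partition of $\{1,\dots,p\}$ obtained by putting $q$ and $r$ in the same block iff $s_q=s_r$, with blocks ordered by increasing common value of $s_q$. *)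

theory Defs
  imports "HOL-Probability.Probability" "HOL-Combinatorics.Multiset_Permutations"
begin

definition mset_of_mults :: "nat \<Rightarrow> (nat \<Rightarrow> nat) \<Rightarrow> nat multiset" where
  "mset_of_mults h m = (\<Sum>a\<in>{1..h}. replicate_mset (m a) a)"

(* Relative order of s_1,...,s_p (list positions 1-indexed): ordered partition of {1..p},
   blocks ordered by increasing common value *)
definition rel_order :: "nat list \<Rightarrow> nat set list" where
  "rel_order s = map (\<lambda>v. {q \<in> {1..length s}. s ! (q - 1) = v}) (sorted_list_of_set (set s))"

definition ordered_partition :: "nat \<Rightarrow> nat set list \<Rightarrow> bool" where
  "ordered_partition p R \<longleftrightarrow> (\<forall>B\<in>set R. B \<noteq> {}) \<and>
     (\<forall>i j. i < j \<and> j < length R \<longrightarrow> R ! i \<inter> R ! j = {}) \<and> \<Union>(set R) = {1..p}"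

definition prob_rel_order :: "nat \<Rightarrow> (nat \<Rightarrow> nat) \<Rightarrow> nat \<Rightarrow> nat set list \<Rightarrow> real" where
  "prob_rel_order h m p R =
     measure_pmf.prob (pmf_of_set (permutations_of_multiset (mset_of_mults h m)))
       {\<pi>. rel_order (take p \<pi>) = R}"

end

theory Submission
  imports Defs
begin

(* Adding one letter c to a multiset of size N moves the probability of any event depending only
   on the first p letters of a uniform permutation by at most p/(N+1). Conditioning on the first
   letter: with probability 1/(N+1) it is c, which costs at most 1/(N+1); otherwise it is a letter
   x drawn with the same relative weights as before, and the remaining word is a uniform
   permutation of M - {#x#} with or without c, so induction on p bounds the rest by p/(N+1).
   Adding the at most 5 missing letters one at a time gives |P1 - P2| <= 5p/(n'+1) <= 125/n. *)

definition prefix_prob :: "nat \<Rightarrow> 'a multiset \<Rightarrow> 'a list set \<Rightarrow> real" where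
  "prefix_prob p M E =
     measure_pmf.prob (pmf_of_set (permutations_of_multiset M)) {\<pi>. take p \<pi> \<in> E}"

lemma prefix_prob_card:
  "prefix_prob p M E =
     card {\<pi> \<in> permutations_of_multiset M. take p \<pi> \<in> E} / card (permutations_of_multiset M)"
  unfolding prefix_prob_def by (subst measure_pmf_of_set) (auto simp: Int_def conj_commute)

lemma prefix_prob_nonneg: "0 \<le> prefix_prob p M E"
  by (simp add: prefix_prob_def)

lemma prefix_prob_le_1: "prefix_prob p M E \<le> 1"
  by (simp add: prefix_prob_def)

lemma prefix_prob_0: "prefix_prob 0 M E = (if [] \<in> E then 1 else 0)"
  by (simp add: prefix_prob_def)

lemma size_times_prefix_prob_Suc:
  "real (size M) * prefix_prob (Suc p) M E =
     (\<Sum>x\<in>set_mset M. real (count M x) * prefix_prob p (M - {#x#}) {l. x # l \<in> E})"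
proof (cases "M = {#}")
  case False
  define S where "S x = {\<sigma> \<in> permutations_of_multiset (M - {#x#}). take p \<sigma> \<in> {l. x # l \<in> E}}" for x
  define K where "K = card (permutations_of_multiset M)"
  have "{\<pi> \<in> permutations_of_multiset M. take (Suc p) \<pi> \<in> E} = (\<Union>x\<in>set_mset M. (#) x ` S x)"
    unfolding S_def by (subst permutations_of_multiset_nonempty[OF False]) auto
  also have "card \<dots> = (\<Sum>x\<in>set_mset M. card ((#) x ` S x))"
    by (rule card_UN_disjoint) (auto simp: S_def)
  also have "\<dots> = (\<Sum>x\<in>set_mset M. card (S x))"
    by (intro sum.cong refl card_image) auto
  finally have "card {\<pi> \<in> permutations_of_multiset M. take (Suc p) \<pi> \<in> E} = (\<Sum>x\<in>set_mset M. card (S x))" .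
  then have "real (size M) * prefix_prob (Suc p) M E = (\<Sum>x\<in>set_mset M. real (size M) * card (S x) / K)"
    by (simp add: prefix_prob_card K_def sum_divide_distrib sum_distrib_left)
  also have "\<dots> = (\<Sum>x\<in>set_mset M. real (count M x) * prefix_prob p (M - {#x#}) {l. x # l \<in> E})"
  proof (intro sum.cong refl)
    fix x assume "x \<in> set_mset M"
    then have "real K * count M x = real (size M) * card (permutations_of_multiset (M - {#x#}))"
      unfolding K_def by (metis card_permutations_of_multiset_remove_aux of_nat_mult)
    moreover have "K > 0" "card (permutations_of_multiset (M - {#x#})) > 0"
      by (simp_all add: K_def card_gt_0_iff)
    ultimately show "real (size M) * card (S x) / K = real (count M x) * prefix_prob p (M - {#x#}) {l. x # l \<in> E}"
      by (simp add: prefix_prob_card S_def field_simps)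
  qed
  finally show ?thesis .
qed simp

lemma size_times_prefix_prob_Suc_add_mset:
  "(real (size M) + 1) * prefix_prob (Suc p) (add_mset c M) E =
     prefix_prob p M {l. c # l \<in> E} +
     (\<Sum>x\<in>set_mset M. real (count M x) * prefix_prob p (add_mset c (M - {#x#})) {l. x # l \<in> E})"
proof -
  define G where "G x = prefix_prob p (add_mset c M - {#x#}) {l. x # l \<in> E}" for x
  have "(real (size M) + 1) * prefix_prob (Suc p) (add_mset c M) E =
          (\<Sum>x\<in>insert c (set_mset M). (real (count M x) + (if x = c then 1 else 0)) * G x)"
    using size_times_prefix_prob_Suc[of "add_mset c M" p E]
    by (simp add: G_def add_ac) (intro sum.cong refl, simp)
  also have "\<dots> = (\<Sum>x\<in>insert c (set_mset M). real (count M x) * G x) + G c"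
    by (simp add: distrib_right sum.distrib if_distrib[of "\<lambda>a. a * _"] cong: if_cong)
  also have "(\<Sum>x\<in>insert c (set_mset M). real (count M x) * G x) = (\<Sum>x\<in>set_mset M. real (count M x) * G x)"
    by (rule sum.mono_neutral_right) (auto simp: not_in_iff)
  also have "\<dots> = (\<Sum>x\<in>set_mset M. real (count M x) * prefix_prob p (add_mset c (M - {#x#})) {l. x # l \<in> E})"
    by (intro sum.cong refl) (simp add: G_def)
  finally show ?thesis by (simp add: G_def)
qed

lemma prefix_prob_add_mset_diff:
  "\<bar>prefix_prob p (add_mset c M) E - prefix_prob p M E\<bar> \<le> real p / (real (size M) + 1)"
proof (induction p arbitrary: M E)
  case 0
  show ?case by (simp add: prefix_prob_0)
next
  case (Suc p)
  define F where "F x = {l. x # l \<in> E}" for x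
  define Q where "Q x = prefix_prob p (M - {#x#}) (F x)" for x
  define Q' where "Q' x = prefix_prob p (add_mset c (M - {#x#})) (F x)" for x
  define \<Delta> where "\<Delta> = prefix_prob (Suc p) (add_mset c M) E - prefix_prob (Suc p) M E"
  have split: "(real (size M) + 1) * \<Delta> =
      (prefix_prob p M (F c) - prefix_prob (Suc p) M E) + (\<Sum>x\<in>set_mset M. real (count M x) * (Q' x - Q x))"
    using size_times_prefix_prob_Suc[of M p E] size_times_prefix_prob_Suc_add_mset[of M p c E]
    by (simp add: \<Delta>_def F_def Q_def Q'_def algebra_simps sum_subtractf)
  have "(real (size M) + 1) * \<bar>\<Delta>\<bar> = \<bar>(real (size M) + 1) * \<Delta>\<bar>"
    by (simp add: abs_mult)
  also have "\<dots> \<le> \<bar>prefix_prob p M (F c) - prefix_prob (Suc p) M E\<bar> +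
                   \<bar>\<Sum>x\<in>set_mset M. real (count M x) * (Q' x - Q x)\<bar>"
    unfolding split by (rule abs_triangle_ineq)
  also have "\<dots> \<le> 1 + real p"
  proof (rule add_mono)
    show "\<bar>prefix_prob p M (F c) - prefix_prob (Suc p) M E\<bar> \<le> 1"
      using prefix_prob_nonneg[of p M "F c"] prefix_prob_le_1[of p M "F c"]
        prefix_prob_nonneg[of "Suc p" M E] prefix_prob_le_1[of "Suc p" M E] by linarith
    have "\<bar>Q' x - Q x\<bar> \<le> real p / real (size M)" if "x \<in># M" for x
    proof -
      have "size M = Suc (size (M - {#x#}))"
        using that by (metis insert_DiffM size_add_mset)
      then show ?thesis
        using Suc.IH[of "M - {#x#}" "F x"] by (simp add: Q_def Q'_def add.commute)
    qed
    then have "\<bar>\<Sum>x\<in>set_mset M. real (count M x) * (Q' x - Q x)\<bar> \<le>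
                 (\<Sum>x\<in>set_mset M. real (count M x) * (real p / real (size M)))"
      by (intro order.trans[OF sum_abs] sum_mono) (simp add: abs_mult mult_left_mono del: times_divide_eq_right)
    also have "\<dots> = real (size M) * (real p / real (size M))"
      by (simp add: size_multiset_overloaded_eq sum_distrib_right del: times_divide_eq_right)
    also have "\<dots> \<le> real p"
      by (cases "size M = 0") simp_all
    finally show "\<bar>\<Sum>x\<in>set_mset M. real (count M x) * (Q' x - Q x)\<bar> \<le> real p" .
  qed
  finally show ?case
    by (simp add: \<Delta>_def le_divide_eq algebra_simps)
qed

lemma prefix_prob_union_diff:
  "\<bar>prefix_prob p (M + D) E - prefix_prob p M E\<bar> \<le> real (size D) * real p / (real (size M) + 1)"
proof (induction D)
  case (add x D)
  have "\<bar>prefix_prob p (add_mset x (M + D)) E - prefix_prob p (M + D) E\<bar> \<le> real p / (real (size M) + 1)"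
    using prefix_prob_add_mset_diff[of p x "M + D" E]
    by (rule order.trans) (simp add: frac_le)
  with add.IH show ?case
    by (simp add: add_divide_distrib distrib_right)
qed simp

lemma mset_of_mults_split:
  assumes "\<forall>a\<in>{1..h}. m' a \<le> m a"
  shows "mset_of_mults h m = mset_of_mults h m' + mset_of_mults h (\<lambda>a. m a - m' a)"
  unfolding mset_of_mults_def sum.distrib[symmetric]
  using assms by (intro sum.cong refl) (simp add: multiset_eq_iff)

lemma size_mset_of_mults: "size (mset_of_mults h m) = (\<Sum>a\<in>{1..h}. m a)"
  by (simp add: mset_of_mults_def size_multiset_sum)

lemma prob_rel_order_eq_prefix_prob:
  "prob_rel_order h m p R = prefix_prob p (mset_of_mults h m) {l. rel_order l = R}"
  by (simp add: prob_rel_order_def prefix_prob_def)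

lemma bounded_product_div_le:
  fixes d p m k :: nat
  assumes "d \<le> k" "p \<le> k"
  shows "real d * real p / (real m + 1) \<le> real k ^ 3 / real (m + d)"
proof (cases "d = 0")
  case False
  then have "m \<le> k * m"
    using assms(1) by simp
  with assms(1) have "real m + real d \<le> real k * (real m + 1)"
    by (metis add_mono distrib_left mult.right_neutral of_nat_1 of_nat_add of_nat_le_iff of_nat_mult)
  moreover have "real d * real p \<le> real k ^ 2"
    using assms by (simp add: power2_eq_square mult_mono)
  ultimately have "real d * real p * (real m + real d) \<le> real k ^ 2 * (real k * (real m + 1))"
    by (intro mult_mono) auto
  with False show ?thesis
    by (simp add: divide_le_eq le_divide_eq power2_eq_square power3_eq_cube algebra_simps)
qed simp

lemma prob_rel_order_add_letters:
  assumes "p \<le> 5" and le: "\<forall>a\<in>{1..h}. n' a \<le> n a" and "(\<Sum>a\<in>{1..h}. n a - n' a) \<le> 5"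
  shows "\<bar>prob_rel_order h n p R - prob_rel_order h n' p R\<bar> \<le> 125 / real (\<Sum>a\<in>{1..h}. n a)"
proof -
  define M where "M = mset_of_mults h n'"
  define D where "D = mset_of_mults h (\<lambda>a. n a - n' a)"
  have split: "mset_of_mults h n = M + D"
    unfolding M_def D_def by (rule mset_of_mults_split[OF le])
  have "size D \<le> 5"
    using assms(3) by (simp add: D_def size_mset_of_mults)
  have total: "(\<Sum>a\<in>{1..h}. n a) = size M + size D"
    using split size_mset_of_mults[of h n] by simp
  have "\<bar>prob_rel_order h n p R - prob_rel_order h n' p R\<bar> \<le> real (size D) * real p / (real (size M) + 1)"
    unfolding prob_rel_order_eq_prefix_prob split M_def[symmetric] by (rule prefix_prob_union_diff)
  also have "\<dots> \<le> real 5 ^ 3 / real (size M + size D)"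
    using \<open>size D \<le> 5\<close> \<open>p \<le> 5\<close> by (rule bounded_product_div_le)
  finally show ?thesis
    unfolding total by simp
qed

theorem lemma2p9:
  shows "\<exists>C::real. \<forall>(p::nat) (h::nat) (n::nat \<Rightarrow> nat) (n'::nat \<Rightarrow> nat) (R::nat set list).
    p \<le> 5 \<longrightarrow> ordered_partition p R \<longrightarrow>
    (\<forall>a\<in>{1..h}. n' a \<le> n a) \<longrightarrow>
    (\<Sum>a\<in>{1..h}. n a - n' a) \<le> 5 \<longrightarrow>
    p \<le> (\<Sum>a\<in>{1..h}. n' a) \<longrightarrow>
    \<bar>prob_rel_order h n p R - prob_rel_order h n' p R\<bar> \<le> C / real (\<Sum>a\<in>{1..h}. n a)"
  by (intro exI[of _ 125] allI impI prob_rel_order_add_letters)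

end
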